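(* Let $\mathcal{H}$ be a hedgehog with support function $h$ and average width $\overline{w}$, let $k>2$ be an integer, and let $\mathcal{P}_k$ be its $k$th Order Preserving Set. For $s\in[0,2\pi]$, the point $\mathcal{P}_k(s)$ is singular (i.e. $\mathcal{P}_k'(s)=0$) if and only if \[ \frac1k\sum_{j=1}^{k}\rho_{\mathcal{H}}\Big(s+\frac{2\pi j}{k}\Big)=\frac12\overline{w}. \] Furthermore, a singular point $\mathcal{P}_k(s)$ is a cusp if and only if $\sum_{j=1}^{k}\rho_{\mathcal{H}}'\big(s+\frac{2\pi j}{k}\big)\neq0$.
   Context: Write $u(s)=(\cos s,\sin s)$, $u'(s)=(-\sin s,\cos s)$. A hedgehog is a closed planar curve determined by a smooth $2\pi$-periodic function $h$ (its support function) via $\mathcal{H}(s)=h(s)u(s)+h'(s)u'(s)$. Its signed radius of curvature at parameter $s$ is $\rho_{\mathcal{H}}(s)=h(s)+h''(s)$, and its average width is $\overline{w}=\frac1\pi\int_0^{2\pi}h(s)\,ds$. For $(x,y)\in\mathbb{R}^2$ let $(x,y)^\perp=(-y,x)$. The $k$th Order Preserving Set of $\mathcal{H}$ is the curve $\mathcal{P}_k(s)=\frac{1}{k}\sum_{j=1}^{k}\Big(\cos\big(\tfrac{2\pi j}{k}\big)\,\mathcal{H}\big(s+\tfrac{2\pi j}{k}\big)-\sin\big(\tfrac{2\pi j}{k}\big)\,\mathcal{H}\big(s+\tfrac{2\pi j}{k}\big)^{\perp}\Big)-\frac{1}{2}\overline{w}\,u(s)$. A singular point $f(s_0)$ of a smooth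 curve $f$ is a cusp if $f$ is locally diffeomorphic (in source and target) near $s_0$ to $t\mapsto(t^2,t^3)$ at $t=0$; equivalently $f'(s_0)=0$ and $\det(f''(s_0),f'''(s_0))\neq0$. *)

theory Defs
  imports "HOL-Analysis.Analysis"
begin

definition smooth_fun :: "(real \<Rightarrow> real) \<Rightarrow> bool" where
  "smooth_fun h \<longleftrightarrow> (\<forall>n x. ((deriv ^^ n) h) differentiable (at x))"

definition uvec :: "real \<Rightarrow> real \<times> real" where
  "uvec s = (cos s, sin s)"

definition uvec' :: "real \<Rightarrow> real \<times> real" where
  "uvec' s = (- sin s, cos s)"

definition perp :: "real \<times> real \<Rightarrow> real \<times> real" where
  "perp p = (- snd p, fst p)"

definition hedgehog :: "(real \<Rightarrow> real) \<Rightarrow> real \<Rightarrow> real \<times> real" where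
  "hedgehog h s = h s *\<^sub>R uvec s + deriv h s *\<^sub>R uvec' s"

definition curv_radius :: "(real \<Rightarrow> real) \<Rightarrow> real \<Rightarrow> real" where
  "curv_radius h s = h s + deriv (deriv h) s"

definition avg_width :: "(real \<Rightarrow> real) \<Rightarrow> real" where
  "avg_width h = (1 / pi) * integral {0..2*pi} h"

definition OPS :: "(real \<Rightarrow> real) \<Rightarrow> nat \<Rightarrow> real \<Rightarrow> real \<times> real" where
  "OPS h k s =
     (1 / real k) *\<^sub>R (\<Sum>j = 1..k.
        cos (2 * pi * real j / real k) *\<^sub>R hedgehog h (s + 2 * pi * real j / real k)
      - sin (2 * pi * real j / real k) *\<^sub>R perp (hedgehog h (s + 2 * pi * real j / real k)))
     - ((1 / 2) * avg_width h) *\<^sub>R uvec s"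

definition cderiv :: "(real \<Rightarrow> real \<times> real) \<Rightarrow> real \<Rightarrow> real \<times> real" where
  "cderiv f = (\<lambda>s. vector_derivative f (at s))"

definition det2 :: "real \<times> real \<Rightarrow> real \<times> real \<Rightarrow> real" where
  "det2 a b = fst a * snd b - snd a * fst b"

definition singular_point :: "(real \<Rightarrow> real \<times> real) \<Rightarrow> real \<Rightarrow> bool" where
  "singular_point f s0 \<longleftrightarrow> cderiv f s0 = 0"

(* cusp, via the stated equivalent criterion f'(s0)=0, det(f''(s0), f'''(s0)) \<noteq> 0 *)
definition is_cusp :: "(real \<Rightarrow> real \<times> real) \<Rightarrow> real \<Rightarrow> bool" where
  "is_cusp f s0 \<longleftrightarrow> cderiv f s0 = 0 \<and>
     det2 (cderiv (cderiv f) s0) (cderiv (cderiv (cderiv f)) s0) \<noteq> 0"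

end

theory Submission
  imports Defs
begin

(* Each summand of the Order Preserving Set is the hedgehog rotated back by 2 pi j / k. Since
   H' = rho u', rotating back turns its derivative into rho(s + 2 pi j / k) u'(s), so
   P_k' = a u' with a = (mean of the rho(s + 2 pi j / k)) - w/2. For any curve with velocity a u',
   the singular points are the zeros of a, and at such a point f'' = a' u' and
   f''' = a'' u' - 2 a' u, whence det (f'', f''') = 2 a'^2. *)

lemma smooth_fun_has_real_derivative:
  assumes "smooth_fun h"
  shows "(h has_real_derivative deriv h x) (at x)"
  using assms DERIV_deriv_iff_real_differentiable unfolding smooth_fun_def
  by (metis funpow_0)

lemma smooth_fun_deriv:
  assumes "smooth_fun h"
  shows "smooth_fun (deriv h)"
  using assms unfolding smooth_fun_def by (metis comp_apply funpow_Suc_right)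

lemma smooth_fun_add:
  assumes f: "smooth_fun f" and g: "smooth_fun g"
  shows "smooth_fun (\<lambda>x. f x + g x)"
proof -
  have "(deriv ^^ n) (\<lambda>x. f x + g x) = (\<lambda>x. (deriv ^^ n) f x + (deriv ^^ n) g x)" for n
  proof (induction n)
    case (Suc n)
    have "((\<lambda>x. (deriv ^^ n) f x + (deriv ^^ n) g x) has_real_derivative
        (deriv ^^ Suc n) f y + (deriv ^^ Suc n) g y) (at y)" for y
      using f g unfolding smooth_fun_def
      by (auto intro!: DERIV_add simp: DERIV_deriv_iff_real_differentiable)
    then show ?case
      by (simp add: Suc.IH fun_eq_iff DERIV_imp_deriv)
  qed simp
  then show ?thesis
    using f g unfolding smooth_fun_def by (auto intro: differentiable_add)
qed

lemma smooth_fun_curv_radius: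
  assumes "smooth_fun h"
  shows "smooth_fun (curv_radius h)"
  using smooth_fun_add[OF assms smooth_fun_deriv[OF smooth_fun_deriv[OF assms]]]
  by (simp add: curv_radius_def[abs_def])

lemma smooth_fun_shifted_mean_has_real_derivative:
  assumes "smooth_fun g"
  shows "((\<lambda>x. (1 / real k) * (\<Sum>j = 1..k. g (x + t j))) has_real_derivative
           (1 / real k) * (\<Sum>j = 1..k. deriv g (x + t j))) (at x)"
  using smooth_fun_has_real_derivative[OF assms]
  by (intro DERIV_cmult DERIV_sum) (simp add: DERIV_shift[symmetric])

lemma uvec_has_vector_derivative: "(uvec has_vector_derivative uvec' x) (at x)"
  unfolding uvec_def[abs_def] uvec'_def
  by (auto intro!: derivative_eq_intros simp: has_real_derivative_iff_has_vector_derivative[symmetric])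

lemma uvec'_has_vector_derivative: "(uvec' has_vector_derivative - uvec x) (at x)"
  unfolding uvec'_def[abs_def] uvec_def
  by (auto intro!: derivative_eq_intros simp: has_real_derivative_iff_has_vector_derivative[symmetric])

lemma uvec'_neq_0: "uvec' x \<noteq> 0"
  using sin_zero_norm_cos_one[of x] by (auto simp: uvec'_def zero_prod_def)

lemma hedgehog_has_vector_derivative:
  assumes "smooth_fun h"
  shows "(hedgehog h has_vector_derivative curv_radius h x *\<^sub>R uvec' x) (at x)"
proof -
  have "(hedgehog h has_vector_derivative
      (h x *\<^sub>R uvec' x + deriv h x *\<^sub>R uvec x)
      + (deriv h x *\<^sub>R (- uvec x) + deriv (deriv h) x *\<^sub>R uvec' x)) (at x)"
    unfolding hedgehog_def[abs_def]
    using smooth_fun_has_real_derivative[OF assms]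
      smooth_fun_has_real_derivative[OF smooth_fun_deriv[OF assms]]
    by (intro has_vector_derivative_add has_vector_derivative_scaleR
        uvec_has_vector_derivative uvec'_has_vector_derivative)
  then show ?thesis
    by (simp add: curv_radius_def scaleR_add_left)
qed

definition rot_cw :: "real \<Rightarrow> real \<times> real \<Rightarrow> real \<times> real" where
  "rot_cw a p = cos a *\<^sub>R p - sin a *\<^sub>R perp p"

lemma bounded_linear_rot_cw: "bounded_linear (rot_cw a)"
proof -
  have "bounded_linear perp"
    unfolding perp_def[abs_def]
    by (intro bounded_linear_Pair bounded_linear_minus bounded_linear_fst bounded_linear_snd)
  then show ?thesis
    unfolding rot_cw_def[abs_def] by (auto intro!: bounded_linear_intros)
qed

lemma rot_cw_uvec': "rot_cw a (uvec' (x + a)) = uvec' x"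
  by (simp add: rot_cw_def uvec'_def perp_def sin_add cos_add) (use sin_cos_squared_add[of a] in algebra)

lemma rotated_hedgehog_has_vector_derivative:
  assumes "smooth_fun h"
  shows "((\<lambda>s. rot_cw a (hedgehog h (s + a))) has_vector_derivative curv_radius h (x + a) *\<^sub>R uvec' x) (at x)"
proof -
  have "((\<lambda>s. s + a) has_vector_derivative 1) (at x)"
    by (auto intro!: derivative_eq_intros simp flip: has_real_derivative_iff_has_vector_derivative)
  then have "((\<lambda>s. hedgehog h (s + a)) has_vector_derivative curv_radius h (x + a) *\<^sub>R uvec' (x + a)) (at x)"
    using vector_diff_chain_at hedgehog_has_vector_derivative[OF assms] by (fastforce simp: o_def)
  then have "((\<lambda>s. rot_cw a (hedgehog h (s + a))) has_vector_derivative
      rot_cw a (curv_radius h (x + a) *\<^sub>R uvec' (x + a))) (at x)"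
    by (rule bounded_linear.has_vector_derivative[OF bounded_linear_rot_cw])
  then show ?thesis
    by (simp add: linear_scale[OF bounded_linear.linear[OF bounded_linear_rot_cw]] rot_cw_uvec')
qed

lemma OPS_has_vector_derivative:
  assumes "smooth_fun h"
  shows "(OPS h k has_vector_derivative
           ((1 / real k) * (\<Sum>j = 1..k. curv_radius h (x + 2 * pi * real j / real k))
             - (1 / 2) * avg_width h) *\<^sub>R uvec' x) (at x)"
proof -
  define t where "t j = 2 * pi * real j / real k" for j :: nat
  have OPS_eq: "OPS h k = (\<lambda>s. (1 / real k) *\<^sub>R (\<Sum>j = 1..k. rot_cw (t j) (hedgehog h (s + t j)))
      - ((1 / 2) * avg_width h) *\<^sub>R uvec s)"
    by (simp add: OPS_def rot_cw_def t_def fun_eq_iff)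
  have "(OPS h k has_vector_derivative (1 / real k) *\<^sub>R (\<Sum>j = 1..k. curv_radius h (x + t j) *\<^sub>R uvec' x)
      - ((1 / 2) * avg_width h) *\<^sub>R uvec' x) (at x)"
    unfolding OPS_eq
    by (intro has_vector_derivative_diff bounded_linear.has_vector_derivative[OF bounded_linear_scaleR_right]
        has_vector_derivative_sum rotated_hedgehog_has_vector_derivative[OF assms] uvec_has_vector_derivative)
  then show ?thesis
    by (simp add: t_def scaleR_sum_left[symmetric] algebra_simps)
qed

lemma cderiv_at:
  assumes "(f has_vector_derivative f') (at x)"
  shows "cderiv f x = f'"
  using assms by (simp add: cderiv_def vector_derivative_at)

lemma cderiv_eqI:
  assumes "\<And>x. (f has_vector_derivative f' x) (at x)"
  shows "cderiv f = f'"
  using assms cderiv_at by blast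

lemma singular_point_iff_speed_eq_0:
  assumes "\<And>x. (f has_vector_derivative a x *\<^sub>R uvec' x) (at x)"
  shows "singular_point f s \<longleftrightarrow> a s = 0"
  using uvec'_neq_0[of s] by (simp add: singular_point_def cderiv_eqI[OF assms])

lemma is_cusp_iff_speed_deriv_neq_0:
  assumes f_deriv: "\<And>x. (f has_vector_derivative a x *\<^sub>R uvec' x) (at x)"
    and a_deriv: "\<And>x. (a has_real_derivative a' x) (at x)"
    and a'_deriv: "(a' has_real_derivative a'') (at s)"
    and "a s = 0"
  shows "is_cusp f s \<longleftrightarrow> a' s \<noteq> 0"
proof -
  have "((\<lambda>x. a x *\<^sub>R uvec' x) has_vector_derivative
      a x *\<^sub>R (- uvec x) + a' x *\<^sub>R uvec' x) (at x)" for x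
    by (rule has_vector_derivative_scaleR[OF a_deriv uvec'_has_vector_derivative])
  then have f'': "cderiv (cderiv f) = (\<lambda>x. a x *\<^sub>R (- uvec x) + a' x *\<^sub>R uvec' x)"
    unfolding cderiv_eqI[OF f_deriv] by (rule cderiv_eqI)
  have "((\<lambda>x. a x *\<^sub>R (- uvec x) + a' x *\<^sub>R uvec' x) has_vector_derivative
      (a s *\<^sub>R (- uvec' s) + a' s *\<^sub>R (- uvec s)) + (a' s *\<^sub>R (- uvec s) + a'' *\<^sub>R uvec' s)) (at s)"
    by (intro has_vector_derivative_add has_vector_derivative_scaleR a_deriv a'_deriv
        has_vector_derivative_minus uvec_has_vector_derivative uvec'_has_vector_derivative)
  then have f''': "cderiv (cderiv (cderiv f)) s = a'' *\<^sub>R uvec' s - 2 *\<^sub>R a' s *\<^sub>R uvec s"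
    using \<open>a s = 0\<close> unfolding f'' by (simp add: cderiv_at scaleR_2 algebra_simps del: scaleR_scaleR)
  have "det2 (cderiv (cderiv f) s) (cderiv (cderiv (cderiv f)) s) = 2 * (a' s)\<^sup>2"
    unfolding f''' using \<open>a s = 0\<close>
    by (simp add: f'' det2_def uvec_def uvec'_def) (use sin_cos_squared_add[of s] in algebra)
  then show ?thesis
    using \<open>a s = 0\<close> by (simp add: is_cusp_def cderiv_eqI[OF f_deriv])
qed

theorem proposition3p15:
  fixes h :: "real \<Rightarrow> real" and k :: nat and s :: real
  assumes "smooth_fun h"
    and "\<forall>x. h (x + 2 * pi) = h x"
    and "k > 2"
    and "s \<in> {0..2*pi}"
  shows "(singular_point (OPS h k) s \<longleftrightarrow>
           (1 / real k) * (\<Sum>j = 1..k. curv_radius h (s + 2 * pi * real j / real k))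
             = (1 / 2) * avg_width h)
       \<and> (singular_point (OPS h k) s \<longrightarrow>
           (is_cusp (OPS h k) s \<longleftrightarrow>
             (\<Sum>j = 1..k. deriv (curv_radius h) (s + 2 * pi * real j / real k)) \<noteq> 0))"
proof -
  define t where "t j = 2 * pi * real j / real k" for j :: nat
  define a where "a x = (1 / real k) * (\<Sum>j = 1..k. curv_radius h (x + t j)) - (1 / 2) * avg_width h" for x
  define a' where "a' x = (1 / real k) * (\<Sum>j = 1..k. deriv (curv_radius h) (x + t j))" for x
  have \<rho>: "smooth_fun (curv_radius h)"
    using assms(1) by (rule smooth_fun_curv_radius)
  have OPS_deriv: "(OPS h k has_vector_derivative a x *\<^sub>R uvec' x) (at x)" for x
    unfolding a_def t_def by (rule OPS_has_vector_derivative[OF assms(1)])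
  have a_deriv: "(a has_real_derivative a' x) (at x)" for x
    unfolding a_def[abs_def] a'_def
    using DERIV_diff[OF smooth_fun_shifted_mean_has_real_derivative[OF \<rho>, of k t x] DERIV_const] by simp
  have "(a' has_real_derivative (1 / real k) * (\<Sum>j = 1..k. deriv (deriv (curv_radius h)) (s + t j))) (at s)"
    unfolding a'_def[abs_def] by (rule smooth_fun_shifted_mean_has_real_derivative[OF smooth_fun_deriv[OF \<rho>]])
  then have "singular_point (OPS h k) s \<Longrightarrow> is_cusp (OPS h k) s \<longleftrightarrow> a' s \<noteq> 0"
    using is_cusp_iff_speed_deriv_neq_0[OF OPS_deriv a_deriv] singular_point_iff_speed_eq_0[OF OPS_deriv]
    by blast
  moreover have "a' s \<noteq> 0 \<longleftrightarrow> (\<Sum>j = 1..k. deriv (curv_radius h) (s + t j)) \<noteq> 0"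
    using assms(3) by (simp add: a'_def)
  ultimately show ?thesis
    unfolding singular_point_iff_speed_eq_0[OF OPS_deriv] a_def t_def by auto
qed

end
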